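(* Let $G$ be a finite connected graph with node set $V$, let $U\subseteq V$, and let $S_U$ be the set of nodes $v$ for which no $x\in U$ satisfies $e(v)=d(v,x)+e(x)$. Then any node $v\in S_U$ with $e(v)=\min_{u\in S_U}e(u)$ is its own unique tight upper certificate: the only node $x\in V$ with $e(v)=d(v,x)+e(x)$ is $x=v$.
   Context: $d$ is the shortest-path distance and $e(u)=\max_{w\in V}d(u,w)$. A node $x$ is a tight upper certificate for $v$ if $e(v)=d(v,x)+e(x)$. *)

theory Defs
  imports Main
begin

definition simple_graph :: "'a set \<Rightarrow> ('a \<Rightarrow> 'a \<Rightarrow> bool) \<Rightarrow> bool" where
  "simple_graph V E \<longleftrightarrow> finite V \<and> (\<forall>u w. E u w \<longrightarrow> u \<in> V \<and> w \<in> V)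
     \<and> (\<forall>u w. E u w \<longrightarrow> E w u) \<and> (\<forall>u. \<not> E u u)"

definition is_walk :: "'a set \<Rightarrow> ('a \<Rightarrow> 'a \<Rightarrow> bool) \<Rightarrow> 'a list \<Rightarrow> bool" where
  "is_walk V E xs \<longleftrightarrow> xs \<noteq> [] \<and> set xs \<subseteq> V \<and>
     (\<forall>i. Suc i < length xs \<longrightarrow> E (xs ! i) (xs ! Suc i))"

definition connected_graph :: "'a set \<Rightarrow> ('a \<Rightarrow> 'a \<Rightarrow> bool) \<Rightarrow> bool" where
  "connected_graph V E \<longleftrightarrow> V \<noteq> {} \<and>
     (\<forall>u\<in>V. \<forall>w\<in>V. \<exists>xs. is_walk V E xs \<and> hd xs = u \<and> last xs = w)"

definition gdist :: "'a set \<Rightarrow> ('a \<Rightarrow> 'a \<Rightarrow> bool) \<Rightarrow> 'a \<Rightarrow> 'a \<Rightarrow> nat" where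
  "gdist V E u w = (LEAST n. \<exists>xs. is_walk V E xs \<and> hd xs = u \<and> last xs = w \<and> length xs = Suc n)"

definition ecc :: "'a set \<Rightarrow> ('a \<Rightarrow> 'a \<Rightarrow> bool) \<Rightarrow> 'a \<Rightarrow> nat" where
  "ecc V E u = Max (gdist V E u ` V)"

definition tight_cert :: "'a set \<Rightarrow> ('a \<Rightarrow> 'a \<Rightarrow> bool) \<Rightarrow> 'a \<Rightarrow> 'a \<Rightarrow> bool" where
  "tight_cert V E v x \<longleftrightarrow> ecc V E v = gdist V E v x + ecc V E x"

end

theory Submission
  imports Defs
begin

text \<open>Tight certificates compose: if x certifies v and y certifies x, the triangle inequality
  and the trivial bound e(v) \<le> d(v,y) + e(y) force y to certify v. Moreover a certificate
  x \<noteq> v has strictly smaller eccentricity than v. So if v \<in> S_U had a certificate x \<noteq> v, either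
  x \<in> S_U, contradicting the minimality of e(v), or x has a certificate in U, which would then
  certify v as well, contradicting v \<in> S_U.\<close>

lemma is_walk_append_tl:
  assumes "is_walk V E xs" "is_walk V E ys" "last xs = hd ys"
  shows "is_walk V E (xs @ tl ys)"
  unfolding is_walk_def
proof (intro conjI allI impI)
  show "xs @ tl ys \<noteq> []" using assms(1) by (simp add: is_walk_def)
  show "set (xs @ tl ys) \<subseteq> V" using assms(1,2) by (auto simp: is_walk_def dest: list.set_sel(2))
next
  fix i assume i: "Suc i < length (xs @ tl ys)"
  have xs_steps: "\<And>i. Suc i < length xs \<Longrightarrow> E (xs ! i) (xs ! Suc i)" and "xs \<noteq> []"
    using assms(1) by (auto simp: is_walk_def)
  have ys_steps: "\<And>i. Suc i < length ys \<Longrightarrow> E (ys ! i) (ys ! Suc i)" and "ys \<noteq> []"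
    using assms(2) by (auto simp: is_walk_def)
  consider "Suc i < length xs" | "Suc i = length xs" | "length xs \<le> i"
    by linarith
  then show "E ((xs @ tl ys) ! i) ((xs @ tl ys) ! Suc i)"
  proof cases
    case 1
    then show ?thesis using xs_steps by (simp add: nth_append)
  next
    case 2
    have "(xs @ tl ys) ! i = ys ! 0"
      using 2 assms(3) \<open>xs \<noteq> []\<close> \<open>ys \<noteq> []\<close>
      by (simp add: nth_append last_conv_nth hd_conv_nth flip: 2)
    moreover have "(xs @ tl ys) ! Suc i = ys ! 1" and "1 < length ys"
      using 2 i by (simp_all add: nth_append nth_tl)
    ultimately show ?thesis using ys_steps[of 0] by simp
  next
    case 3
    then obtain k where "i = length xs + k" by (auto simp: le_iff_add)
    then show ?thesis using i ys_steps[of "Suc k"] by (simp add: nth_append nth_tl)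
  qed
qed

lemma last_append_tl:
  assumes "ys \<noteq> []" "last xs = hd ys" "xs \<noteq> []"
  shows "last (xs @ tl ys) = last ys"
  using assms by (cases ys) auto

lemma shortest_walk_exists:
  assumes "connected_graph V E" "u \<in> V" "w \<in> V"
  obtains xs where "is_walk V E xs" "hd xs = u" "last xs = w" "length xs = Suc (gdist V E u w)"
proof -
  obtain xs where "is_walk V E xs" "hd xs = u" "last xs = w"
    using assms unfolding connected_graph_def by blast
  then have "\<exists>n xs. is_walk V E xs \<and> hd xs = u \<and> last xs = w \<and> length xs = Suc n"
    by (metis is_walk_def length_greater_0_conv Suc_pred)
  from LeastI_ex[OF this] show ?thesis
    using that unfolding gdist_def by blast
qed

lemma gdist_le_walk_length:
  assumes "is_walk V E xs" "hd xs = u" "last xs = w"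
  shows "gdist V E u w \<le> length xs - 1"
proof -
  have "length xs = Suc (length xs - 1)" using assms(1) by (simp add: is_walk_def)
  then show ?thesis unfolding gdist_def using assms by (intro Least_le) blast
qed

lemma gdist_triangle:
  assumes "connected_graph V E" "u \<in> V" "y \<in> V" "w \<in> V"
  shows "gdist V E u w \<le> gdist V E u y + gdist V E y w"
proof -
  obtain xs where xs: "is_walk V E xs" "hd xs = u" "last xs = y" "length xs = Suc (gdist V E u y)"
    using shortest_walk_exists[OF assms(1,2,3)] .
  obtain ys where ys: "is_walk V E ys" "hd ys = y" "last ys = w" "length ys = Suc (gdist V E y w)"
    using shortest_walk_exists[OF assms(1,3,4)] .
  have "xs \<noteq> []" "ys \<noteq> []" using xs(1) ys(1) by (auto simp: is_walk_def)
  have "gdist V E u w \<le> length (xs @ tl ys) - 1"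
  proof (rule gdist_le_walk_length)
    show "is_walk V E (xs @ tl ys)" using is_walk_append_tl[OF xs(1) ys(1)] xs(3) ys(2) by simp
    show "hd (xs @ tl ys) = u" using xs(2) \<open>xs \<noteq> []\<close> by simp
    show "last (xs @ tl ys) = w"
      using last_append_tl \<open>xs \<noteq> []\<close> \<open>ys \<noteq> []\<close> xs(3) ys(2,3) by metis
  qed
  then show ?thesis using xs(4) ys(4) by simp
qed

lemma gdist_self:
  assumes "u \<in> V"
  shows "gdist V E u u = 0"
  using gdist_le_walk_length[of V E "[u]" u u] assms by (simp add: is_walk_def)

lemma gdist_eq_0_imp_eq:
  assumes "connected_graph V E" "u \<in> V" "w \<in> V" "gdist V E u w = 0"
  shows "u = w"
proof -
  obtain xs where "hd xs = u" "last xs = w" "length xs = Suc 0"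
    using shortest_walk_exists[OF assms(1,2,3)] assms(4) by metis
  then show ?thesis by (cases xs) auto
qed

lemma gdist_le_ecc:
  assumes "simple_graph V E" "w \<in> V"
  shows "gdist V E u w \<le> ecc V E u"
  using assms unfolding ecc_def simple_graph_def by (intro Max_ge) auto

lemma ecc_attained:
  assumes "simple_graph V E" "connected_graph V E"
  obtains w where "w \<in> V" "ecc V E u = gdist V E u w"
proof -
  have "ecc V E u \<in> gdist V E u ` V"
    using assms unfolding ecc_def simple_graph_def connected_graph_def by (intro Max_in) auto
  then show ?thesis using that by blast
qed

lemma ecc_le_gdist_plus_ecc:
  assumes "simple_graph V E" "connected_graph V E" "v \<in> V" "y \<in> V"
  shows "ecc V E v \<le> gdist V E v y + ecc V E y"
proof -
  obtain w where w: "w \<in> V" "ecc V E v = gdist V E v w"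
    using ecc_attained[OF assms(1,2)] .
  have "gdist V E v w \<le> gdist V E v y + gdist V E y w"
    using gdist_triangle[OF assms(2,3,4) w(1)] .
  also have "\<dots> \<le> gdist V E v y + ecc V E y"
    using gdist_le_ecc[OF assms(1) w(1)] by simp
  finally show ?thesis using w(2) by simp
qed

lemma tight_cert_self:
  assumes "v \<in> V"
  shows "tight_cert V E v v"
  using gdist_self[OF assms] by (simp add: tight_cert_def)

lemma tight_cert_trans:
  assumes "simple_graph V E" "connected_graph V E" "v \<in> V" "x \<in> V" "y \<in> V"
    and "tight_cert V E v x" "tight_cert V E x y"
  shows "tight_cert V E v y"
proof -
  have "gdist V E v y + ecc V E y \<le> gdist V E v x + gdist V E x y + ecc V E y"
    using gdist_triangle[OF assms(2,3,4,5)] by simp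
  also have "\<dots> = ecc V E v"
    using assms(6,7) by (simp add: tight_cert_def)
  finally show ?thesis
    using ecc_le_gdist_plus_ecc[OF assms(1,2,3,5)] by (simp add: tight_cert_def)
qed

lemma tight_cert_ecc_less:
  assumes "connected_graph V E" "v \<in> V" "x \<in> V" "tight_cert V E v x" "x \<noteq> v"
  shows "ecc V E x < ecc V E v"
proof -
  have "gdist V E v x \<noteq> 0" using gdist_eq_0_imp_eq[OF assms(1,2,3)] assms(5) by auto
  then show ?thesis using assms(4) by (simp add: tight_cert_def)
qed

theorem lemma1:
  fixes V U :: "'a set" and E :: "'a \<Rightarrow> 'a \<Rightarrow> bool" and S :: "'a set" and v :: 'a
  assumes "simple_graph V E" and "connected_graph V E" and "U \<subseteq> V"
    and "S = {w \<in> V. \<not> (\<exists>x\<in>U. tight_cert V E w x)}"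
    and "v \<in> S" and "ecc V E v = Min (ecc V E ` S)"
  shows "{x \<in> V. tight_cert V E v x} = {v}"
proof -
  have "v \<in> V" "finite S" using assms(1,4,5) by (auto simp: simple_graph_def)
  have "x = v" if x: "x \<in> V" "tight_cert V E v x" for x
  proof (rule ccontr)
    assume "x \<noteq> v"
    then have "ecc V E x < ecc V E v"
      using tight_cert_ecc_less[OF assms(2) \<open>v \<in> V\<close> x] by blast
    then have "x \<notin> S" using assms(6) \<open>finite S\<close> by (metis Min_le finite_imageI image_eqI leD)
    then obtain y where y: "y \<in> U" "tight_cert V E x y" using assms(4) x(1) by auto
    have "tight_cert V E v y"
      using tight_cert_trans[OF assms(1,2) \<open>v \<in> V\<close> x(1) _ x(2) y(2)] y(1) assms(3) by blast
    then show False using assms(4,5) y(1) by auto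
  qed
  then show ?thesis using tight_cert_self[OF \<open>v \<in> V\<close>] \<open>v \<in> V\<close> by auto
qed

end
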